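(* Let $I$ be a non-empty upward directed set with no maximal element. For $\alpha\in I$ let $E_\alpha$ be the set of tuples $(\alpha_1,\alpha_2,\dots,\alpha_{2n-1},\alpha_{2n})$ ($n\ge1$) of elements of $I$ such that (i) $\alpha_{2n-1}=\alpha$; (ii) $\alpha_{2i-1}\le\alpha_{2i}$ for all $1\le i\le n$; (iii) $\alpha_{2i-1}\not\le\alpha_{2j-1}$ for all $1\le j<i\le n$. For $\alpha\le\beta$ and $(\beta_1,\dots,\beta_{2m})\in E_\beta$, let $j$ be the smallest index with $\alpha\le\beta_{2j-1}$ and set $\epsilon_{\alpha\beta}(\beta_1,\dots,\beta_{2m})=(\beta_1,\dots,\beta_{2j-2},\alpha,\beta_{2j})$. Then each $E_\alpha$ is non-empty, $\epsilon_{\alpha\beta}$ is a well-defined map $E_\beta\to E_\alpha$, $\{E_\alpha,\epsilon_{\alpha\beta}\}$ is an $I$-inverse system, and every $\epsilon_{\alpha\beta}$ is surjective.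
   Context: An $I$-inverse system consists of sets $E_\alpha$ ($\alpha\in I$) and maps $\epsilon_{\alpha\beta}:E_\beta\to E_\alpha$ for $\alpha\le\beta$ with $\epsilon_{\alpha\alpha}=\mathrm{id}$ and $\epsilon_{\alpha\beta}\epsilon_{\beta\gamma}=\epsilon_{\alpha\gamma}$. *)

theory Defs
  imports Main
begin

definition directed_set :: "'a set \<Rightarrow> ('a \<Rightarrow> 'a \<Rightarrow> bool) \<Rightarrow> bool" where
  "directed_set I le \<longleftrightarrow> I \<noteq> {}
     \<and> (\<forall>a\<in>I. le a a)
     \<and> (\<forall>a\<in>I. \<forall>b\<in>I. \<forall>c\<in>I. le a b \<longrightarrow> le b c \<longrightarrow> le a c)
     \<and> (\<forall>a\<in>I. \<forall>b\<in>I. \<exists>c\<in>I. le a c \<and> le b c)"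

definition no_maximal :: "'a set \<Rightarrow> ('a \<Rightarrow> 'a \<Rightarrow> bool) \<Rightarrow> bool" where
  "no_maximal I le \<longleftrightarrow> (\<forall>a\<in>I. \<exists>b\<in>I. le a b \<and> \<not> le b a)"

definition inverse_system :: "'a set \<Rightarrow> ('a \<Rightarrow> 'a \<Rightarrow> bool) \<Rightarrow> ('a \<Rightarrow> 'e set)
     \<Rightarrow> ('a \<Rightarrow> 'a \<Rightarrow> 'e \<Rightarrow> 'e) \<Rightarrow> bool" where
  "inverse_system I le E e \<longleftrightarrow>
     (\<forall>a\<in>I. \<forall>b\<in>I. le a b \<longrightarrow> (\<forall>x\<in>E b. e a b x \<in> E a))
   \<and> (\<forall>a\<in>I. \<forall>x\<in>E a. e a a x = x)
   \<and> (\<forall>a\<in>I. \<forall>b\<in>I. \<forall>c\<in>I. le a b \<longrightarrow> le b c \<longrightarrow>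
        (\<forall>x\<in>E c. e a b (e b c x) = e a c x))"

text \<open>Tuples (a_1,...,a_{2n}) are lists xs of length 2n (n \<ge> 1), 0-indexed:
  a_{2i-1} = xs!(2(i-1)), a_{2i} = xs!(2(i-1)+1).\<close>
definition Etup :: "'a set \<Rightarrow> ('a \<Rightarrow> 'a \<Rightarrow> bool) \<Rightarrow> 'a \<Rightarrow> 'a list set" where
  "Etup I le a = {xs. even (length xs) \<and> length xs \<ge> 2 \<and> set xs \<subseteq> I
      \<and> xs ! (length xs - 2) = a
      \<and> (\<forall>i < length xs div 2. le (xs ! (2*i)) (xs ! (2*i+1)))
      \<and> (\<forall>i < length xs div 2. \<forall>j < i. \<not> le (xs ! (2*i)) (xs ! (2*j)))}"

definition eps :: "('a \<Rightarrow> 'a \<Rightarrow> bool) \<Rightarrow> 'a \<Rightarrow> 'a \<Rightarrow> 'a list \<Rightarrow> 'a list" where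
  "eps le a b ys = (let j = (LEAST j. le a (ys ! (2*j))) in take (2*j) ys @ [a, ys ! (2*j+1)])"

end

theory Submission
  imports Defs
begin

(* For a \<le> b and ys \<in> E_b the "cut index" j (the first pair whose start lies above a)
   exists because the last start is b; eps then keeps the pairs before j and replaces the
   start of pair j by a.
   The main theorem collects these facts. *)

lemma Etup_memE:
  assumes "xs \<in> Etup I le a"
  obtains n where "length xs = 2*n" "n \<ge> 1" "set xs \<subseteq> I" "xs!(2*(n-1)) = a"
    "\<And>i. i < n \<Longrightarrow> le (xs!(2*i)) (xs!(2*i+1))"
    "\<And>i j. i < n \<Longrightarrow> j < i \<Longrightarrow> \<not> le (xs!(2*i)) (xs!(2*j))"
proof -
  from assms have "even (length xs)" "length xs \<ge> 2" by (auto simp: Etup_def)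
  then obtain n where n: "length xs = 2*n" "n \<ge> 1" by (auto elim!: evenE)
  then have "2*(n-1) = length xs - 2" by auto
  with n assms that show ?thesis by (auto simp: Etup_def)
qed

lemma Etup_memI:
  assumes "length xs = 2*n" "n \<ge> 1" "set xs \<subseteq> I" "xs!(2*(n-1)) = a"
    "\<And>i. i < n \<Longrightarrow> le (xs!(2*i)) (xs!(2*i+1))"
    "\<And>i j. i < n \<Longrightarrow> j < i \<Longrightarrow> \<not> le (xs!(2*i)) (xs!(2*j))"
  shows "xs \<in> Etup I le a"
proof -
  have "2*(n-1) = length xs - 2" using assms by auto
  with assms show ?thesis by (auto simp: Etup_def)
qed

lemma Etup_starts_not_above:
  assumes "xs \<in> Etup I le a" "k < length xs div 2 - 1"
  shows "\<not> le a (xs!(2*k))"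
  using assms by (elim Etup_memE) auto

lemma take_last_pair:
  assumes "length xs = 2*n" "n \<ge> 1"
  shows "take (2*(n-1)) xs @ [xs!(2*(n-1)), xs!(2*(n-1)+1)] = xs"
proof -
  obtain m where m: "n = Suc m" using assms(2) by (cases n) auto
  have "xs = take (Suc (Suc (2*m))) xs" using assms m by simp
  also have "\<dots> = take (2*m) xs @ [xs!(2*m), xs!(2*m+1)]"
    using assms m take_Suc_conv_app_nth[of "Suc (2*m)" xs] take_Suc_conv_app_nth[of "2*m" xs]
    by simp
  finally show ?thesis using m by simp
qed

lemma nth_take_append_pair:
  assumes "2*j+1 < length ys" "m < 2*j+2"
  shows "(take (2*j) ys @ [x,y]) ! m = (if m < 2*j then ys!m else if m = 2*j then x else y)"
  using assms by (auto simp: nth_append)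

lemma eps_eq:
  assumes "le a (ys!(2*j))" "\<And>k. k < j \<Longrightarrow> \<not> le a (ys!(2*k))"
  shows "eps le a b ys = take (2*j) ys @ [a, ys!(2*j+1)]"
proof -
  have "(LEAST j. le a (ys!(2*j))) = j"
    by (rule Least_equality) (use assms not_less in blast)+
  then show ?thesis unfolding eps_def Let_def by simp
qed

text \<open>For a \<le> b and ys \<in> E_b the cut index exists (the last start is b) and is a pair index.\<close>

lemma eps_unfold:
  assumes "le a b" "ys \<in> Etup I le b"
  obtains j where "j < length ys div 2" "le a (ys!(2*j))" "\<And>k. k < j \<Longrightarrow> \<not> le a (ys!(2*k))"
    "eps le a b ys = take (2*j) ys @ [a, ys!(2*j+1)]"
proof -
  obtain n where n: "length ys = 2*n" "n \<ge> 1" "ys!(2*(n-1)) = b"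
    using assms(2) by (elim Etup_memE) blast
  have last: "le a (ys!(2*(n-1)))" using n assms(1) by simp
  define j where "j = (LEAST j. le a (ys!(2*j)))"
  have "j \<le> n-1" unfolding j_def using last by (rule Least_le)
  moreover have "le a (ys!(2*j))" unfolding j_def using last by (rule LeastI)
  moreover have "\<not> le a (ys!(2*k))" if "k < j" for k
    using that not_less_Least unfolding j_def by blast
  moreover have "j < length ys div 2" using \<open>j \<le> n-1\<close> n by auto
  ultimately show ?thesis by (intro that[of j] eps_eq) auto
qed

lemma eps_restores:
  assumes x: "x \<in> Etup I le a"
    and prefix: "take (length x - 2) ys = take (length x - 2) x"
    and start: "le a (ys!(length x - 2))"
    and finish: "ys!(length x - 1) = x!(length x - 1)"
  shows "eps le a b ys = x"
proof -
  obtain n where n: "length x = 2*n" "n \<ge> 1" "x!(2*(n-1)) = a"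
    using x by (elim Etup_memE) blast
  have pos: "length x - 2 = 2*(n-1)" "length x - 1 = 2*(n-1)+1" using n by auto
  have "\<not> le a (ys!(2*k))" if "k < n-1" for k
  proof -
    have "ys!(2*k) = x!(2*k)"
      using nth_take[of "2*k" "length x - 2"] prefix that pos by (metis mult_less_cancel1 zero_less_numeral)
    then show ?thesis using Etup_starts_not_above[OF x] that n by auto
  qed
  then have "eps le a b ys = take (2*(n-1)) ys @ [a, ys!(2*(n-1)+1)]"
    using start pos by (intro eps_eq) auto
  also have "\<dots> = take (2*(n-1)) x @ [x!(2*(n-1)), x!(2*(n-1)+1)]"
    using prefix finish pos n by simp
  also have "\<dots> = x" using take_last_pair n by blast
  finally show ?thesis .
qed

text \<open>Reflexivity and transitivity of le on I: all that the construction needs.\<close>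

locale preorder_on =
  fixes I :: "'a set" and le :: "'a \<Rightarrow> 'a \<Rightarrow> bool"
  assumes refl: "a \<in> I \<Longrightarrow> le a a"
    and trans: "\<lbrakk>a \<in> I; b \<in> I; c \<in> I; le a b; le b c\<rbrakk> \<Longrightarrow> le a c"

lemma directed_set_preorder_on: "directed_set I le \<Longrightarrow> preorder_on I le"
  unfolding directed_set_def by unfold_locales blast+

context preorder_on
begin

lemma Etup_nonempty: "a \<in> I \<Longrightarrow> [a, a] \<in> Etup I le a"
  by (rule Etup_memI[where n=1]) (auto intro: refl)

text \<open>eps is well defined: the truncated tuple still satisfies (i)--(iii); the new last
  pair is increasing because a \<le> ys!(2j) \<le> ys!(2j+1).\<close>

lemma eps_in_Etup:
  assumes ab: "a \<in> I" "le a b" and ys: "ys \<in> Etup I le b"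
  shows "eps le a b ys \<in> Etup I le a"
proof -
  obtain n where n: "length ys = 2*n" "set ys \<subseteq> I"
      "\<And>i. i < n \<Longrightarrow> le (ys!(2*i)) (ys!(2*i+1))"
      "\<And>i j. i < n \<Longrightarrow> j < i \<Longrightarrow> \<not> le (ys!(2*i)) (ys!(2*j))"
    using ys by (elim Etup_memE) blast
  obtain j where j: "j < length ys div 2" "le a (ys!(2*j))" "\<And>k. k < j \<Longrightarrow> \<not> le a (ys!(2*k))"
      and eps: "eps le a b ys = take (2*j) ys @ [a, ys!(2*j+1)]"
    using ab(2) ys by (rule eps_unfold) blast
  have jn: "j < n" "2*j+1 < length ys" using j n(1) by auto
  have inI: "ys!k \<in> I" if "k < length ys" for k using n(2) that nth_mem by blast
  have new_pair: "le a (ys!(2*j+1))"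
    using trans[OF ab(1) inI inI j(2) n(3)[OF jn(1)]] jn by simp
  note nt = nth_take_append_pair[OF jn(2)]
  show ?thesis unfolding eps
  proof (rule Etup_memI[where n="Suc j"])
    show "set (take (2*j) ys @ [a, ys!(2*j+1)]) \<subseteq> I"
      using n(2) ab(1) inI[OF jn(2)] set_take_subset[of "2*j" ys] by auto
  next
    fix i assume "i < Suc j"
    then show "le ((take (2*j) ys @ [a, ys!(2*j+1)]) ! (2*i))
                  ((take (2*j) ys @ [a, ys!(2*j+1)]) ! (2*i+1))"
      using nt n(3)[of i] jn new_pair by (cases "i < j") auto
  next
    fix i k assume "i < Suc j" "k < i"
    then show "\<not> le ((take (2*j) ys @ [a, ys!(2*j+1)]) ! (2*i))
                    ((take (2*j) ys @ [a, ys!(2*j+1)]) ! (2*k))"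
      using nt n(4)[of i k] jn j(3) by (cases "i < j") auto
  qed (use jn nt in simp_all)
qed

text \<open>For a = b the cut index is the last pair, and eps changes nothing.\<close>

lemma eps_id:
  assumes "a \<in> I" "x \<in> Etup I le a"
  shows "eps le a a x = x"
proof -
  have "length x - 2 < length x" "x!(length x - 2) = a"
    using assms(2) by (auto simp: Etup_def)
  then show ?thesis using assms by (intro eps_restores) (auto intro: refl)
qed

text \<open>Compatibility: for a \<le> b \<le> c the cut index of a in x is at most that of b, and cutting
  first at b and then at a is the same as cutting directly at a.\<close>

lemma eps_comp:
  assumes abc: "a \<in> I" "b \<in> I" "c \<in> I" "le a b" "le b c" and x: "x \<in> Etup I le c"
  shows "eps le a b (eps le b c x) = eps le a c x"
proof -
  have xI: "set x \<subseteq> I" using x by (auto simp: Etup_def)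
  obtain j where j: "j < length x div 2" "le b (x!(2*j))"
      and eps_bc: "eps le b c x = take (2*j) x @ [b, x!(2*j+1)]"
    using abc(5) x by (rule eps_unfold) blast
  obtain j' where j': "le a (x!(2*j'))" "\<And>k. k < j' \<Longrightarrow> \<not> le a (x!(2*k))"
      and eps_ac: "eps le a c x = take (2*j') x @ [a, x!(2*j'+1)]"
    using trans[OF abc] x by (rule eps_unfold) blast
  have jl: "2*j+1 < length x" using j by auto
  have "le a (x!(2*j))" using trans[OF abc(1,2) _ abc(4) j(2)] xI jl by (simp add: subset_iff)
  then have jj: "j' \<le> j" using j'(2) not_less by blast
  note nt = nth_take_append_pair[OF jl]
  have "eps le a b (eps le b c x) = take (2*j') (eps le b c x) @ [a, (eps le b c x)!(2*j'+1)]"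
  proof (rule eps_eq)
    show "le a (eps le b c x ! (2*j'))"
      using jj j'(1) abc(4) nt jl unfolding eps_bc by (cases "j' = j") auto
    show "\<not> le a (eps le b c x ! (2*k))" if "k < j'" for k
      using that jj j'(2) nt jl unfolding eps_bc by auto
  qed
  also have "\<dots> = eps le a c x"
    unfolding eps_ac eps_bc using jj jl nt by (cases "j' = j") (auto simp: min_def)
  finally show ?thesis .
qed

lemma lift_by_update:
  assumes ab: "a \<in> I" "b \<in> I" "le a b" "le b a" and x: "x \<in> Etup I le a"
  shows "x[length x - 2 := b] \<in> Etup I le b \<and> eps le a b (x[length x - 2 := b]) = x"
proof -
  obtain n where n: "length x = 2*n" "n \<ge> 1" "set x \<subseteq> I" "x!(2*(n-1)) = a"
      "\<And>i. i < n \<Longrightarrow> le (x!(2*i)) (x!(2*i+1))"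
      "\<And>i j. i < n \<Longrightarrow> j < i \<Longrightarrow> \<not> le (x!(2*i)) (x!(2*j))"
    using x by (elim Etup_memE) blast
  define ys where "ys = x[length x - 2 := b]"
  have pos: "length x - 2 = 2*(n-1)" using n(1,2) by auto
  have yk: "ys!k = (if k = 2*(n-1) then b else x!k)" if "k < 2*n" for k
    unfolding ys_def using that n(1) pos by auto
  have xI: "x!k \<in> I" if "k < 2*n" for k using nth_mem[of k x] n(1,3) that by auto
  have "ys \<in> Etup I le b"
  proof (rule Etup_memI[where n=n])
    show "set ys \<subseteq> I" unfolding ys_def using n(3) ab(2) set_update_subset_insert by fastforce
  next
    fix i assume i: "i < n"
    show "le (ys!(2*i)) (ys!(2*i+1))"
    proof (cases "i = n-1")
      case True
      have "le a (x!(2*i+1))" using n(4) n(5)[OF i] True by simp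
      moreover have "2*i+1 < 2*n" using i by simp
      ultimately have "le b (x!(2*i+1))" using trans[OF ab(2,1) xI ab(4)] by blast
      then show ?thesis using yk i True by simp
    next
      case False
      then show ?thesis using yk i n(5)[OF i] by simp
    qed
  next
    fix i k assume i: "i < n" "k < i"
    show "\<not> le (ys!(2*i)) (ys!(2*k))"
    proof (cases "i = n-1")
      case True
      have "k < length x div 2 - 1" "2*k < 2*n" using i True n(1) by auto
      then have "\<not> le b (x!(2*k))"
        using trans[OF ab(1,2) xI ab(3)] Etup_starts_not_above[OF x] by blast
      then show ?thesis using yk i True by simp
    next
      case False
      then show ?thesis using yk i n(6)[OF i] by auto
    qed
  qed (use n(1,2,4) yk in \<open>simp_all add: ys_def\<close>)
  moreover have "eps le a b ys = x"
  proof (rule eps_restores[OF x])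
    show "take (length x - 2) ys = take (length x - 2) x"
      unfolding ys_def by (simp add: take_update_cancel)
    show "le a (ys!(length x - 2))" "ys!(length x - 1) = x!(length x - 1)"
      unfolding ys_def using ab(3) n(1,2) by auto
  qed
  ultimately show ?thesis by (simp add: ys_def)
qed

text \<open>Lifting when b \<not>\<le> a: append the pair (b, b); b lies above no earlier start, since
  such a start would lie above a.\<close>

lemma lift_by_append:
  assumes ab: "a \<in> I" "b \<in> I" "le a b" "\<not> le b a" and x: "x \<in> Etup I le a"
  shows "x @ [b, b] \<in> Etup I le b \<and> eps le a b (x @ [b, b]) = x"
proof -
  obtain n where n: "length x = 2*n" "n \<ge> 1" "set x \<subseteq> I" "x!(2*(n-1)) = a"
      "\<And>i. i < n \<Longrightarrow> le (x!(2*i)) (x!(2*i+1))"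
      "\<And>i j. i < n \<Longrightarrow> j < i \<Longrightarrow> \<not> le (x!(2*i)) (x!(2*j))"
    using x by (elim Etup_memE) blast
  define ys where "ys = x @ [b, b]"
  have yk: "ys!k = (if k < 2*n then x!k else b)" if "k < 2*n+2" for k
    unfolding ys_def using that n(1) by (auto simp: nth_append nth_Cons')
  have b_new: "\<not> le b (x!(2*k))" if "k < n" for k
  proof
    assume b_le: "le b (x!(2*k))"
    show False
    proof (cases "k = n-1")
      case False
      then have "k < n-1" using that by simp
      moreover have "x!(2*k) \<in> I" using nth_mem[of "2*k" x] n(1,3) that by auto
      ultimately show False
        using trans[OF ab(1,2) _ ab(3) b_le] Etup_starts_not_above[OF x] n(1) by auto
    qed (use b_le n(4) ab(4) in simp)
  qed
  have "ys \<in> Etup I le b"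
  proof (rule Etup_memI[where n="Suc n"])
    show "set ys \<subseteq> I" unfolding ys_def using n(3) ab(2) by auto
  next
    fix i assume "i < Suc n"
    then show "le (ys!(2*i)) (ys!(2*i+1))"
      using yk n(5)[of i] refl[OF ab(2)] by (cases "i = n") auto
  next
    fix i k assume "i < Suc n" "k < i"
    then show "\<not> le (ys!(2*i)) (ys!(2*k))"
      using yk n(6)[of i k] b_new[of k] by (cases "i = n") auto
  qed (use n(1,2) yk in \<open>simp_all add: ys_def\<close>)
  moreover have "eps le a b ys = x"
  proof (rule eps_restores[OF x])
    have pos: "length x - 2 = 2*(n-1)" "length x - 2 < length x" "length x - 1 < length x"
      using n(1,2) by auto
    show "take (length x - 2) ys = take (length x - 2) x" unfolding ys_def by simp
    show "le a (ys!(length x - 2))" "ys!(length x - 1) = x!(length x - 1)"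
      unfolding ys_def using pos n(4) refl[OF ab(1)] by (simp_all add: nth_append)
  qed
  ultimately show ?thesis by (simp add: ys_def)
qed

lemma eps_surj:
  assumes "a \<in> I" "b \<in> I" "le a b"
  shows "eps le a b ` Etup I le b = Etup I le a"
proof
  show "eps le a b ` Etup I le b \<subseteq> Etup I le a"
    using assms eps_in_Etup by blast
  show "Etup I le a \<subseteq> eps le a b ` Etup I le b"
  proof
    fix x assume "x \<in> Etup I le a"
    then show "x \<in> eps le a b ` Etup I le b"
      using lift_by_update[OF assms] lift_by_append[OF assms]
      by (cases "le b a") (metis image_eqI)+
  qed
qed

end

theorem mainTheorem3:
  fixes I :: "'a set" and le :: "'a \<Rightarrow> 'a \<Rightarrow> bool"
  assumes "directed_set I le" and "no_maximal I le"
  shows "(\<forall>a\<in>I. Etup I le a \<noteq> {})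
    \<and> (\<forall>a\<in>I. \<forall>b\<in>I. le a b \<longrightarrow> (\<forall>ys\<in>Etup I le b.
          (\<exists>j < length ys div 2. le a (ys ! (2*j))) \<and> eps le a b ys \<in> Etup I le a))
    \<and> inverse_system I le (Etup I le) (eps le)
    \<and> (\<forall>a\<in>I. \<forall>b\<in>I. le a b \<longrightarrow> eps le a b ` Etup I le b = Etup I le a)"
proof -
  interpret preorder_on I le
    using assms(1) by (rule directed_set_preorder_on)
  have nonempty: "Etup I le a \<noteq> {}" if "a \<in> I" for a
    using Etup_nonempty[OF that] by blast
  have cut_index: "\<exists>j < length ys div 2. le a (ys!(2*j))"
    if "le a b" "ys \<in> Etup I le b" for a b ys
    using that by (rule eps_unfold) blast
  have "inverse_system I le (Etup I le) (eps le)"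
    unfolding inverse_system_def using eps_in_Etup eps_id eps_comp by blast
  then show ?thesis
    using nonempty cut_index eps_in_Etup eps_surj by simp
qed

end
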